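(* Let $ABC$ be a non-equilateral triangle with semiperimeter $s$, circumradius $R$, inradius $r$, circumcenter $O$, centroid $G$ and incenter $I$. Then $$\cos\widehat{GOI}=\frac{6R^2-s^2-r^2+2Rr}{2\sqrt{9R^2-2s^2+2r^2+8Rr}\cdot\sqrt{R^2-2Rr}}.$$
   Context: The centroid $G$ has barycentric coordinates $1:1:1$ and the incenter $I$ has barycentric coordinates $a:b:c$, where $a=BC$, $b=CA$, $c=AB$. *)

theory Defs
  imports "HOL-Analysis.Analysis"
begin

definition vangle :: "'a::real_inner \<Rightarrow> 'a \<Rightarrow> real" where
  "vangle u v = arccos (inner u v / (norm u * norm v))"

definition centroid :: "real^2 \<Rightarrow> real^2 \<Rightarrow> real^2 \<Rightarrow> real^2" where
  "centroid A B C = (1/3) *\<^sub>R (A + B + C)"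

text \<open>Incenter via barycentric coordinates a:b:c.\<close>
definition incenter :: "real^2 \<Rightarrow> real^2 \<Rightarrow> real^2 \<Rightarrow> real^2" where
  "incenter A B C = (1 / (dist B C + dist C A + dist A B)) *\<^sub>R
      (dist B C *\<^sub>R A + dist C A *\<^sub>R B + dist A B *\<^sub>R C)"

definition circumcenter :: "real^2 \<Rightarrow> real^2 \<Rightarrow> real^2 \<Rightarrow> real^2" where
  "circumcenter A B C = (THE P. dist P A = dist P B \<and> dist P B = dist P C)"

definition circumradius :: "real^2 \<Rightarrow> real^2 \<Rightarrow> real^2 \<Rightarrow> real" where
  "circumradius A B C = dist (circumcenter A B C) A"

definition inradius :: "real^2 \<Rightarrow> real^2 \<Rightarrow> real^2 \<Rightarrow> real" where
  "inradius A B C = infdist (incenter A B C) (affine hull {B, C})"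

definition semiperimeter :: "real^2 \<Rightarrow> real^2 \<Rightarrow> real^2 \<Rightarrow> real" where
  "semiperimeter A B C = (dist B C + dist C A + dist A B) / 2"

definition equilateral :: "real^2 \<Rightarrow> real^2 \<Rightarrow> real^2 \<Rightarrow> bool" where
  "equilateral A B C \<longleftrightarrow> dist A B = dist B C \<and> dist B C = dist C A"

end

theory Submission
  imports Defs
begin

(* Place the origin at the circumcenter O and write x = A - O, y = B - O, z = C - O.
   Then |x| = |y| = |z| = R and, by the polarisation identity, <y,z> = R^2 - a^2/2 etc.
   Since G - O = (x + y + z)/3 and I - O = (a x + b y + c z)/(2s), the quantities
   |G - O|^2, <G - O, I - O> and |I - O|^2 are symmetric polynomials in a, b, c and R.
   They are rewritten in terms of s, R, r using the two classical relations
       abc = 4Rrs   and   r^2 s = (s - a)(s - b)(s - c)   (Heron's formula with area rs),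
   which yield ab + bc + ca = s^2 + r^2 + 4Rr. *)

(* Twice the signed area of the triangle spanned by two plane vectors. *)
definition cross2 :: "real^2 \<Rightarrow> real^2 \<Rightarrow> real" where
  "cross2 u w = u$1 * w$2 - u$2 * w$1"

lemma norm_sq_vec2: "(norm (x::real^2))^2 = (x$1)^2 + (x$2)^2"
  unfolding norm_vec_def L2_set_def sum_2 by simp

lemma inner_vec2: "inner (x::real^2) y = x$1 * y$1 + x$2 * y$2"
  unfolding inner_vec_def sum_2 by simp

lemma cross2_scaleR_left: "cross2 (k *\<^sub>R u) w = k * cross2 u w"
  and cross2_add_left: "cross2 (u + v) w = cross2 u w + cross2 v w"
  and cross2_self: "cross2 w w = 0"
  unfolding cross2_def by (simp_all add: algebra_simps)

lemma lagrange_identity2: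
  "(norm u)^2 * (norm w)^2 = (inner u w)^2 + (cross2 u w)^2"
  unfolding norm_sq_vec2 inner_vec2 cross2_def by algebra

(* A non-degenerate triangle has non-zero area; via Lagrange's identity this is the
   equality case of Cauchy-Schwarz. *)
lemma cross2_noncollinear:
  fixes A B C :: "real^2"
  assumes "\<not> collinear {A, B, C}"
  shows "cross2 (B - A) (C - A) \<noteq> 0"
proof
  assume "cross2 (B - A) (C - A) = 0"
  hence "(inner (B - A) (C - A))^2 = (norm (B - A) * norm (C - A))^2"
    using lagrange_identity2[of "B - A" "C - A"] by (simp add: power_mult_distrib)
  hence "\<bar>inner (B - A) (C - A)\<bar> = norm (B - A) * norm (C - A)"
    by (metis real_sqrt_abs abs_of_nonneg norm_ge_zero mult_nonneg_nonneg)
  hence "collinear {0, B - A, C - A}" by (simp add: norm_cauchy_schwarz_equal)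
  hence "collinear {B, A, C}" by (subst collinear_3) auto
  hence "collinear {A, B, C}" by (simp add: insert_commute)
  with assms show False by simp
qed

lemma equidistant_iff_inner:
  fixes P A B :: "'a::real_inner"
  shows "dist P A = dist P B \<longleftrightarrow> inner (P - A) (B - A) = (norm (B - A))^2 / 2"
proof -
  have "inner (P - A) (B - A) = ((norm (P - A))^2 + (norm (B - A))^2 - (norm (P - B))^2) / 2"
    using dot_norm_neg[of "P - A" "B - A"] by simp
  hence "inner (P - A) (B - A) = (norm (B - A))^2 / 2 \<longleftrightarrow> (norm (P - A))^2 = (norm (P - B))^2"
    by auto
  also have "\<dots> \<longleftrightarrow> dist P A = dist P B"
    by (simp add: dist_norm)
  finally show ?thesis ..
qed

(* Cramer's rule for the 2x2 system <x,u> = alpha, <x,w> = beta. *)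
lemma linear_system2:
  fixes x u w :: "real^2"
  assumes D: "cross2 u w \<noteq> 0"
  shows "(inner x u = \<alpha> \<and> inner x w = \<beta>) \<longleftrightarrow>
    x = (1 / cross2 u w) *\<^sub>R vector [\<alpha> * w$2 - \<beta> * u$2, \<beta> * u$1 - \<alpha> * w$1]"
proof
  assume "inner x u = \<alpha> \<and> inner x w = \<beta>"
  moreover have "x$1 * cross2 u w = inner x u * w$2 - inner x w * u$2"
    and "x$2 * cross2 u w = inner x w * u$1 - inner x u * w$1"
    unfolding inner_vec2 cross2_def by (simp_all add: algebra_simps)
  ultimately have "x$1 * cross2 u w = \<alpha> * w$2 - \<beta> * u$2" "x$2 * cross2 u w = \<beta> * u$1 - \<alpha> * w$1"
    by simp_all
  thus "x = (1 / cross2 u w) *\<^sub>R vector [\<alpha> * w$2 - \<beta> * u$2, \<beta> * u$1 - \<alpha> * w$1]"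
    using D by (simp add: vec_eq_iff forall_2 field_simps)
next
  assume "x = (1 / cross2 u w) *\<^sub>R vector [\<alpha> * w$2 - \<beta> * u$2, \<beta> * u$1 - \<alpha> * w$1]"
  hence x1: "x$1 * cross2 u w = \<alpha> * w$2 - \<beta> * u$2"
    and x2: "x$2 * cross2 u w = \<beta> * u$1 - \<alpha> * w$1"
    using D by simp_all
  have "inner x u * cross2 u w = \<alpha> * cross2 u w"
    using x1 x2 unfolding inner_vec2 cross2_def by algebra
  moreover have "inner x w * cross2 u w = \<beta> * cross2 u w"
    using x1 x2 unfolding inner_vec2 cross2_def by algebra
  ultimately show "inner x u = \<alpha> \<and> inner x w = \<beta>"
    using D by simp
qed

(* The circumcenter of the triangle 0, u, w, obtained by solving the two
   perpendicular-bisector equations with Cramer's rule. *)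
definition circum_offset :: "real^2 \<Rightarrow> real^2 \<Rightarrow> real^2" where
  "circum_offset u w = (1 / cross2 u w) *\<^sub>R
     vector [(norm u)^2 / 2 * w$2 - (norm w)^2 / 2 * u$2, (norm w)^2 / 2 * u$1 - (norm u)^2 / 2 * w$1]"

lemma equidistant_iff_circum_offset:
  fixes P A B C :: "real^2"
  assumes "cross2 (B - A) (C - A) \<noteq> 0"
  shows "(dist P A = dist P B \<and> dist P B = dist P C) \<longleftrightarrow> P = A + circum_offset (B - A) (C - A)"
proof -
  have "(dist P A = dist P B \<and> dist P B = dist P C) \<longleftrightarrow> (dist P A = dist P B \<and> dist P A = dist P C)"
    by auto
  also have "\<dots> \<longleftrightarrow> P - A = circum_offset (B - A) (C - A)"
    unfolding equidistant_iff_inner circum_offset_def by (rule linear_system2[OF assms])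
  also have "\<dots> \<longleftrightarrow> P = A + circum_offset (B - A) (C - A)"
    by (auto simp: algebra_simps)
  finally show ?thesis .
qed

lemma circumcenter_eq:
  fixes A B C :: "real^2"
  assumes "\<not> collinear {A, B, C}"
  shows "circumcenter A B C = A + circum_offset (B - A) (C - A)"
  unfolding circumcenter_def equidistant_iff_circum_offset[OF cross2_noncollinear[OF assms]] by simp

(* The circumradius formula R * (2 * area) = abc, in squared form. *)
lemma norm_circum_offset:
  fixes u w :: "real^2"
  assumes D: "cross2 u w \<noteq> 0"
  shows "(2 * cross2 u w * norm (circum_offset u w))^2 = (norm u * norm w * norm (u - w))^2"
proof -
  have x1: "2 * cross2 u w * (circum_offset u w)$1 = (norm u)^2 * w$2 - (norm w)^2 * u$2"
    and x2: "2 * cross2 u w * (circum_offset u w)$2 = (norm w)^2 * u$1 - (norm u)^2 * w$1"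
    using D unfolding circum_offset_def by (simp_all add: field_simps)
  show ?thesis
    unfolding power_mult_distrib norm_sq_vec2[of "circum_offset u w"] norm_sq_vec2[of "u - w"]
    using x1 x2 unfolding norm_sq_vec2[of u] norm_sq_vec2[of w] by simp algebra
qed

lemma infdist_attained:
  fixes x :: "'a::metric_space"
  assumes "a \<in> A" and "\<And>b. b \<in> A \<Longrightarrow> dist x a \<le> dist x b"
  shows "infdist x A = dist x a"
proof (rule antisym)
  show "infdist x A \<le> dist x a" using infdist_le[OF assms(1)] .
  have "A \<noteq> {}" using assms(1) by blast
  then show "dist x a \<le> infdist x A"
    unfolding infdist_notempty[OF \<open>A \<noteq> {}\<close>] by (rule cINF_greatest) (use assms(2) in blast)
qed

(* Lagrange's identity applied to X minus a point of the line B + t e: the component of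
   X - B orthogonal to e is measured by the cross product, independently of t. *)
lemma dist_to_line_point:
  fixes X B e :: "real^2"
  shows "(norm e * dist X (B + t *\<^sub>R e))^2 = (inner (X - B - t *\<^sub>R e) e)^2 + (cross2 (X - B) e)^2"
proof -
  have "cross2 (X - B - t *\<^sub>R e) e = cross2 (X - B) e"
    unfolding cross2_def by (simp add: algebra_simps)
  moreover have "dist X (B + t *\<^sub>R e) = norm (X - B - t *\<^sub>R e)"
    by (simp add: dist_norm algebra_simps)
  ultimately show ?thesis
    using lagrange_identity2[of "X - B - t *\<^sub>R e" e] by (simp add: power_mult_distrib mult.commute)
qed

(* Distance from a point to the line BC: |(X - B) x (C - B)| / |C - B|, attained at
   the foot of the perpendicular. *)
lemma infdist_line:
  fixes X B C :: "real^2"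
  assumes "B \<noteq> C"
  shows "infdist X (affine hull {B, C}) = \<bar>cross2 (X - B) (C - B)\<bar> / norm (C - B)"
proof -
  define e where "e = C - B"
  have e: "norm e > 0" using assms unfolding e_def by simp
  have line: "affine hull {B, C} = range (\<lambda>t. B + t *\<^sub>R e)"
  proof -
    have "u *\<^sub>R B + v *\<^sub>R C = B + v *\<^sub>R e" if "u + v = 1" for u v
      using that unfolding e_def by (simp add: algebra_simps flip: scaleR_add_left)
    moreover have "B + t *\<^sub>R e = (1 - t) *\<^sub>R B + t *\<^sub>R C" for t
      unfolding e_def by (simp add: algebra_simps)
    ultimately show ?thesis unfolding affine_hull_2 by fastforce
  qed
  have lower: "\<bar>cross2 (X - B) e\<bar> \<le> norm e * dist X (B + t *\<^sub>R e)" for t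
  proof (rule power2_le_imp_le)
    show "\<bar>cross2 (X - B) e\<bar>^2 \<le> (norm e * dist X (B + t *\<^sub>R e))^2"
      unfolding dist_to_line_point by simp
  qed simp
  define t0 where "t0 = inner (X - B) e / (norm e)^2"
  have "inner (X - B - t0 *\<^sub>R e) e = 0"
    using e unfolding t0_def by (simp add: inner_diff_left power2_norm_eq_inner)
  hence "(norm e * dist X (B + t0 *\<^sub>R e))^2 = \<bar>cross2 (X - B) e\<bar>^2"
    unfolding dist_to_line_point by simp
  hence foot: "norm e * dist X (B + t0 *\<^sub>R e) = \<bar>cross2 (X - B) e\<bar>"
    by (rule power2_eq_imp_eq) simp_all
  have "infdist X (affine hull {B, C}) = dist X (B + t0 *\<^sub>R e)"
  proof (rule infdist_attained)
    show "B + t0 *\<^sub>R e \<in> affine hull {B, C}" unfolding line by (rule rangeI)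
    show "dist X (B + t0 *\<^sub>R e) \<le> dist X Q" if "Q \<in> affine hull {B, C}" for Q
    proof -
      from that obtain t where Q: "Q = B + t *\<^sub>R e" unfolding line by blast
      have "norm e * dist X (B + t0 *\<^sub>R e) \<le> norm e * dist X Q"
        using lower[of t] foot Q by simp
      thus ?thesis using e by (simp add: mult_le_cancel_left_pos)
    qed
  qed
  also have "\<dots> = \<bar>cross2 (X - B) (C - B)\<bar> / norm (C - B)"
    using foot e unfolding e_def by (simp add: field_simps)
  finally show ?thesis .
qed

lemma heron_cross2:
  fixes u w :: "real^2"
  defines "a \<equiv> norm (u - w)" and "b \<equiv> norm w" and "c \<equiv> norm u"
  shows "(2 * cross2 u w)^2 = (a + b + c) * (- a + b + c) * (a - b + c) * (a + b - c)"
proof -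
  have "2 * inner u w = c^2 + b^2 - a^2"
    using dot_norm_neg[of u w] unfolding a_def b_def c_def by simp
  moreover have "c^2 * b^2 = (inner u w)^2 + (cross2 u w)^2"
    using lagrange_identity2[of u w] unfolding b_def c_def .
  ultimately show ?thesis by algebra
qed

(* The area equals r * s: the incenter (barycentric weights a, b, c) lies at height
   2 * area / (a + b + c) above the side BC. *)
lemma inradius_mult_perimeter:
  fixes A B C :: "real^2"
  assumes "\<not> collinear {A, B, C}"
  shows "inradius A B C * (dist B C + dist C A + dist A B) = \<bar>cross2 (B - A) (C - A)\<bar>"
proof -
  define a b c where "a = dist B C" and "b = dist C A" and "c = dist A B"
  define I where "I = incenter A B C"
  have "B \<noteq> C" using assms by auto
  hence "a > 0" unfolding a_def by simp
  have p: "a + b + c > 0" using \<open>a > 0\<close> unfolding b_def c_def by (simp add: add_pos_nonneg)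
  have "(a + b + c) *\<^sub>R I = a *\<^sub>R A + b *\<^sub>R B + c *\<^sub>R C"
    using p unfolding I_def incenter_def a_def b_def c_def by simp
  hence "(a + b + c) *\<^sub>R (I - B) = a *\<^sub>R (A - B) + c *\<^sub>R (C - B)"
    by (simp add: algebra_simps)
  hence "(a + b + c) * cross2 (I - B) (C - B) = a * cross2 (A - B) (C - B)"
    by (metis cross2_scaleR_left cross2_add_left cross2_self add_0_right mult_zero_right)
  also have "cross2 (A - B) (C - B) = - cross2 (B - A) (C - A)"
    unfolding cross2_def by (simp add: algebra_simps)
  finally have scaled: "(a + b + c) * \<bar>cross2 (I - B) (C - B)\<bar> = \<bar>cross2 (B - A) (C - A)\<bar> * a"
    using p \<open>a > 0\<close> by (metis abs_minus abs_mult abs_of_pos mult.commute)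
  have r: "inradius A B C * a = \<bar>cross2 (I - B) (C - B)\<bar>"
    unfolding inradius_def I_def[symmetric] infdist_line[OF \<open>B \<noteq> C\<close>] a_def
    using \<open>B \<noteq> C\<close> by (simp add: dist_norm norm_minus_commute)
  have "inradius A B C * (a + b + c) * a = \<bar>cross2 (B - A) (C - A)\<bar> * a"
    unfolding scaled[symmetric] r[symmetric] by (simp add: ac_simps)
  thus ?thesis
    using \<open>a > 0\<close> unfolding a_def b_def c_def by simp
qed

lemma circumcenter_dist:
  fixes A B C :: "real^2"
  assumes "\<not> collinear {A, B, C}"
  shows "dist (circumcenter A B C) A = circumradius A B C"
    and "dist (circumcenter A B C) B = circumradius A B C"
    and "dist (circumcenter A B C) C = circumradius A B C"
proof -
  have "dist (circumcenter A B C) A = dist (circumcenter A B C) B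
      \<and> dist (circumcenter A B C) B = dist (circumcenter A B C) C"
    using equidistant_iff_circum_offset[OF cross2_noncollinear[OF assms]] circumcenter_eq[OF assms]
    by blast
  thus "dist (circumcenter A B C) A = circumradius A B C"
    and "dist (circumcenter A B C) B = circumradius A B C"
    and "dist (circumcenter A B C) C = circumradius A B C"
    unfolding circumradius_def by auto
qed

lemma circumradius_mult_area:
  fixes A B C :: "real^2"
  assumes nc: "\<not> collinear {A, B, C}"
  shows "2 * \<bar>cross2 (B - A) (C - A)\<bar> * circumradius A B C = dist B C * dist C A * dist A B"
proof -
  define D where "D = cross2 (B - A) (C - A)"
  have D: "D \<noteq> 0" using cross2_noncollinear[OF nc] unfolding D_def .
  have sides: "norm (B - A) = dist A B" "norm (C - A) = dist C A" "norm ((B - A) - (C - A)) = dist B C"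
    by (simp_all add: dist_norm norm_minus_commute)
  have "circumradius A B C = norm (circum_offset (B - A) (C - A))"
    unfolding circumradius_def circumcenter_eq[OF nc] by (simp add: dist_norm)
  hence "(2 * D * circumradius A B C)^2 = (dist A B * dist C A * dist B C)^2"
    using norm_circum_offset[OF D[unfolded D_def]] unfolding sides D_def by simp
  hence "(2 * \<bar>D\<bar> * circumradius A B C)^2 = (dist B C * dist C A * dist A B)^2"
    by (simp add: power_mult_distrib)
  thus ?thesis
    unfolding D_def[symmetric] circumradius_def
    by (rule power2_eq_imp_eq) simp_all
qed

(* The two classical relations abc = 4Rrs and r^2 s = (s - a)(s - b)(s - c); the second
   is Heron's formula combined with area = rs. *)
lemma triangle_radii_relations:
  fixes A B C :: "real^2"
  assumes nc: "\<not> collinear {A, B, C}"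
  defines "a \<equiv> dist B C" and "b \<equiv> dist C A" and "c \<equiv> dist A B"
    and "s \<equiv> semiperimeter A B C" and "R \<equiv> circumradius A B C" and "r \<equiv> inradius A B C"
  shows "s > 0" and "a * b * c = 4 * R * r * s" and "r^2 * s = (s - a) * (s - b) * (s - c)"
proof -
  define D where "D = cross2 (B - A) (C - A)"
  have "B \<noteq> C" using nc by auto
  hence "a > 0" unfolding a_def by simp
  thus s: "s > 0"
    unfolding s_def semiperimeter_def a_def by (simp add: add_pos_nonneg)
  have Ds: "\<bar>D\<bar> = 2 * r * s"
    using inradius_mult_perimeter[OF nc] unfolding D_def r_def s_def semiperimeter_def by simp
  show "a * b * c = 4 * R * r * s"
    using circumradius_mult_area[OF nc] Ds
    unfolding D_def[symmetric] a_def[symmetric] b_def[symmetric] c_def[symmetric] R_def[symmetric]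
    by (simp add: ac_simps)
  have "(2 * D)^2 = (a + b + c) * (- a + b + c) * (a - b + c) * (a + b - c)"
    using heron_cross2[of "B - A" "C - A"] unfolding D_def a_def b_def c_def
    by (simp add: dist_norm norm_minus_commute)
  also have "\<dots> = 16 * s * (s - a) * (s - b) * (s - c)"
  proof -
    have "a + b + c = 2 * s" unfolding s_def semiperimeter_def a_def b_def c_def by simp
    thus ?thesis by algebra
  qed
  moreover have "D^2 = (2 * r * s)^2"
    using Ds by (metis power2_abs)
  hence "(2 * D)^2 = 16 * s * (r^2 * s)"
    by algebra
  ultimately have "(16 * s) * (r^2 * s) = (16 * s) * ((s - a) * (s - b) * (s - c))"
    by (metis mult.assoc)
  thus "r^2 * s = (s - a) * (s - b) * (s - c)"
    using s by simp
qed

(* For points A, B, C at distance R from P, the squared norms and inner product of the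
   vectors 3(G - P) and (a + b + c)(I - P), computed from <B - P, C - P> = R^2 - a^2/2
   and its cyclic variants. *)
lemma circumcentric_identities:
  fixes A B C P :: "'a::real_inner"
  assumes "dist P A = R" and "dist P B = R" and "dist P C = R"
  defines "a \<equiv> dist B C" and "b \<equiv> dist C A" and "c \<equiv> dist A B"
  shows "(norm ((A - P) + (B - P) + (C - P)))^2 = 9 * R^2 - (a^2 + b^2 + c^2)"
    and "inner ((A - P) + (B - P) + (C - P)) (a *\<^sub>R (A - P) + b *\<^sub>R (B - P) + c *\<^sub>R (C - P))
           = 3 * R^2 * (a + b + c) - (a * (b^2 + c^2) + b * (c^2 + a^2) + c * (a^2 + b^2)) / 2"
    and "(norm (a *\<^sub>R (A - P) + b *\<^sub>R (B - P) + c *\<^sub>R (C - P)))^2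
           = (a + b + c) * (R^2 * (a + b + c) - a * b * c)"
proof -
  define x y z where "x = A - P" and "y = B - P" and "z = C - P"
  have sq: "inner x x = R^2" "inner y y = R^2" "inner z z = R^2"
    using assms(1-3) unfolding x_def y_def z_def
    by (simp_all add: dist_norm norm_minus_commute flip: power2_norm_eq_inner)
  have "y - z = B - C" "z - x = C - A" "x - y = A - B"
    unfolding x_def y_def z_def by simp_all
  hence "inner y z = R^2 - a^2 / 2" "inner z x = R^2 - b^2 / 2" "inner x y = R^2 - c^2 / 2"
    using dot_norm_neg[of y z] dot_norm_neg[of z x] dot_norm_neg[of x y] sq
    unfolding a_def b_def c_def by (simp_all add: dist_norm power2_norm_eq_inner)
  hence prods: "inner x y = R^2 - c^2 / 2" "inner y x = R^2 - c^2 / 2"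
      "inner y z = R^2 - a^2 / 2" "inner z y = R^2 - a^2 / 2"
      "inner z x = R^2 - b^2 / 2" "inner x z = R^2 - b^2 / 2"
    by (simp_all add: inner_commute)
  show "(norm (x + y + z))^2 = 9 * R^2 - (a^2 + b^2 + c^2)"
    unfolding power2_norm_eq_inner
    by (simp add: sq prods algebra_simps)
  show "inner (x + y + z) (a *\<^sub>R x + b *\<^sub>R y + c *\<^sub>R z)
      = 3 * R^2 * (a + b + c) - (a * (b^2 + c^2) + b * (c^2 + a^2) + c * (a^2 + b^2)) / 2"
    by (simp add: sq prods algebra_simps)
  show "(norm (a *\<^sub>R x + b *\<^sub>R y + c *\<^sub>R z))^2 = (a + b + c) * (R^2 * (a + b + c) - a * b * c)"
    unfolding power2_norm_eq_inner
    by (simp add: sq prods algebra_simps power2_eq_square)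
qed

(* The classical identity ab + bc + ca = s^2 + r^2 + 4Rr, read off from expanding
   (s - a)(s - b)(s - c). *)
lemma sum_of_side_products:
  fixes a b c s R r :: real
  assumes "a + b + c = 2 * s" and "s > 0"
    and "a * b * c = 4 * R * r * s" and "r^2 * s = (s - a) * (s - b) * (s - c)"
  shows "a * b + b * c + c * a = s^2 + r^2 + 4 * R * r"
proof -
  have "s * (a * b + b * c + c * a) = s * (s^2 + r^2 + 4 * R * r)"
    using assms(1,3,4) by algebra
  thus ?thesis using \<open>s > 0\<close> by simp
qed

lemma centroid_incenter_from_circumcenter:
  fixes A B C P :: "'a::real_inner"
  assumes "dist P A = R" and "dist P B = R" and "dist P C = R"
  defines "a \<equiv> dist B C" and "b \<equiv> dist C A" and "c \<equiv> dist A B"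
  defines "G \<equiv> (1/3) *\<^sub>R (A + B + C)" and "I \<equiv> (1 / (a + b + c)) *\<^sub>R (a *\<^sub>R A + b *\<^sub>R B + c *\<^sub>R C)"
  assumes s: "a + b + c = 2 * s" "s > 0"
    and abc: "a * b * c = 4 * R * r * s" and heron: "r^2 * s = (s - a) * (s - b) * (s - c)"
  shows "9 * (norm (G - P))^2 = 9 * R^2 - 2 * s^2 + 2 * r^2 + 8 * R * r"
    and "6 * inner (G - P) (I - P) = 6 * R^2 - s^2 - r^2 + 2 * R * r"
    and "(norm (I - P))^2 = R^2 - 2 * R * r"
proof -
  note ids = circumcentric_identities[OF assms(1-3), folded a_def b_def c_def]
  have q: "a * b + b * c + c * a = s^2 + r^2 + 4 * R * r"
    by (rule sum_of_side_products[OF s abc heron])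
  have G: "G - P = (1/3) *\<^sub>R ((A - P) + (B - P) + (C - P))"
    unfolding G_def by (simp add: algebra_simps) (simp flip: scaleR_add_left)
  have I: "I - P = (1 / (2 * s)) *\<^sub>R (a *\<^sub>R (A - P) + b *\<^sub>R (B - P) + c *\<^sub>R (C - P))"
    using s unfolding I_def by (simp add: algebra_simps flip: scaleR_add_left)
  have squares: "a^2 + b^2 + c^2 = 4 * s^2 - 2 * (s^2 + r^2 + 4 * R * r)"
    using q s(1) by algebra
  have cubic: "a * (b^2 + c^2) + b * (c^2 + a^2) + c * (a^2 + b^2) = 2 * s * (s^2 + r^2 - 2 * R * r)"
    using q s(1) abc by algebra
  show "9 * (norm (G - P))^2 = 9 * R^2 - 2 * s^2 + 2 * r^2 + 8 * R * r"
    unfolding G norm_scaleR power_mult_distrib ids(1) squares by (simp add: power2_eq_square algebra_simps)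
  show "6 * inner (G - P) (I - P) = 6 * R^2 - s^2 - r^2 + 2 * R * r"
    unfolding G I inner_scaleR_left inner_scaleR_right ids(2) cubic s(1)
    using s(2) by (simp add: field_simps power2_eq_square)
  show "(norm (I - P))^2 = R^2 - 2 * R * r"
    unfolding I norm_scaleR power_mult_distrib ids(3) s(1) abc
    using s(2) by (simp add: field_simps power2_eq_square)
qed

(* The cosine of the angle between two vectors; the Cauchy-Schwarz inequality keeps the
   argument of arccos in [-1, 1]. *)
lemma cos_vangle:
  fixes x y :: "'a::real_inner"
  shows "cos (vangle x y) = inner x y / (norm x * norm y)"
proof -
  have "\<bar>inner x y\<bar> \<le> norm x * norm y"
    by (rule Cauchy_Schwarz_ineq2)
  hence "\<bar>inner x y / (norm x * norm y)\<bar> \<le> 1"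
    by (cases "norm x * norm y = 0") (simp_all add: abs_div divide_le_eq)
  thus ?thesis unfolding vangle_def by (simp add: cos_arccos_abs)
qed

theorem mainTheorem6:
  fixes A B C :: "real^2"
  assumes "\<not> collinear {A, B, C}"
    and "\<not> equilateral A B C"
  shows "(let s = semiperimeter A B C; R = circumradius A B C; r = inradius A B C;
              Oc = circumcenter A B C; G = centroid A B C; I = incenter A B C
          in cos (vangle (G - Oc) (I - Oc)) =
             (6 * R^2 - s^2 - r^2 + 2 * R * r) /
             (2 * sqrt (9 * R^2 - 2 * s^2 + 2 * r^2 + 8 * R * r) * sqrt (R^2 - 2 * R * r)))"
proof -
  define s R r where "s = semiperimeter A B C" and "R = circumradius A B C" and "r = inradius A B C"
  define Oc G I where "Oc = circumcenter A B C" and "G = centroid A B C" and "I = incenter A B C"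
  note circ = circumcenter_dist[OF assms(1), folded R_def Oc_def]
  note rel = triangle_radii_relations[OF assms(1), folded s_def R_def r_def]
  have "dist B C + dist C A + dist A B = 2 * s"
    unfolding s_def semiperimeter_def by simp
  note dists = centroid_incenter_from_circumcenter[OF circ this rel,
      folded centroid_def incenter_def, folded G_def I_def]
  have "sqrt (9 * R^2 - 2 * s^2 + 2 * r^2 + 8 * R * r) = 3 * norm (G - Oc)"
    unfolding dists(1)[symmetric] by (simp add: real_sqrt_mult)
  moreover have "sqrt (R^2 - 2 * R * r) = norm (I - Oc)"
    unfolding dists(3)[symmetric] by simp
  ultimately show ?thesis
    unfolding Let_def s_def[symmetric] R_def[symmetric] r_def[symmetric] Oc_def[symmetric]
      G_def[symmetric] I_def[symmetric] cos_vangle dists(2)[symmetric]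
    by simp
qed

end
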